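(* Let $n\ge2$, let $A=(a_{ij})\in\mathbb{R}^{n\times n}$ be pseudo-diagonalizable, and suppose $\max\{a_{11},\dots,a_{nn}\}\le0$. Then $\lambda(A)=0$, $\Gamma(A_\lambda)=I\oplus A$, and $d(A)=1$. Moreover, for any $i\in[n]$, letting $v^{(i)}$ be the vector obtained from the $i$-th column $A_i$ of $A$ by replacing its $i$-th entry by $0$, the set $\{v^{(i)}\}$ is a basis of $V(A)$, i.e. $V(A)=\{\alpha\otimes v^{(i)}:\alpha\in\overline{\mathbb{R}}\}$.
   Context: Max-plus conventions: $\overline{\mathbb{R}}=\mathbb{R}\cup\{-\infty\}$, $\varepsilon=-\infty$, $\oplus=\max$ (entrywise for matrices), $\otimes=+$; $(A\otimes B)_{ij}=\max_t(A_{it}+B_{tj})$, $(\alpha\otimes x)_i=\alpha+x_i$. $I$ is the matrix with $0$ on the diagonal and $\varepsilon$ elsewhere. $P$ is invertible iff it has exactly one real entry in each row and column (others $\varepsilon$); $A,B$ similar if $B=P^{-1}\otimes A\otimes P$ for invertible $P$. Pseudo-diagonal: real diagonal, off-diagonal entries equal to real $0$; pseudo-diagonalizable: similar to a pseudo-diagonal matrix. For finite $A$: $\lambda(A)$ is the maximum cycle mean $\max\{(a_{i_1i_2}+\dots+a_{i_ki_1})/k\}$ over $k\ge1$ and distinct $i_1,\dots,i_k$, the unique eigenvalue; $V(A)=\{x\in\overline{\mathbb{R}}^n:A\otimes x=\lambda(A)\otimes x\}$; $A_\lambda=(-\lambda(A))\otimes A$; $\Gamma(A)=A\oplus A^2\oplus\dots\oplus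 A^n$. A basis of a subspace is an independent generating set with respect to max-combinations; $d(A)$ is the number of elements of a basis of $V(A)$. *)

theory Defs
  imports "HOL-Library.Extended_Real"
begin

text \<open>Max-plus algebra over Rbar = R \<union> {-\<infinity>}, represented inside ereal by
  excluding the value \<infinity>. Index set: a finite type 'n (n = CARD('n)).\<close>

type_synonym 'n mpmat = "'n \<Rightarrow> 'n \<Rightarrow> ereal"
type_synonym 'n mpvec = "'n \<Rightarrow> ereal"

definition rbar :: "ereal \<Rightarrow> bool" where
  "rbar a \<longleftrightarrow> a \<noteq> \<infinity>"

definition rbar_mat :: "('n::finite) mpmat \<Rightarrow> bool" where
  "rbar_mat M \<longleftrightarrow> (\<forall>i j. rbar (M i j))"

definition rbar_vec :: "('n::finite) mpvec \<Rightarrow> bool" where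
  "rbar_vec x \<longleftrightarrow> (\<forall>i. rbar (x i))"

definition lift :: "('n \<Rightarrow> 'n \<Rightarrow> real) \<Rightarrow> 'n mpmat" where
  "lift A = (\<lambda>i j. ereal (A i j))"

definition mp_add :: "('n::finite) mpmat \<Rightarrow> 'n mpmat \<Rightarrow> 'n mpmat" where
  "mp_add A B = (\<lambda>i j. max (A i j) (B i j))"

definition mp_mult :: "('n::finite) mpmat \<Rightarrow> 'n mpmat \<Rightarrow> 'n mpmat" where
  "mp_mult A B = (\<lambda>i j. Max (range (\<lambda>t. A i t + B t j)))"

definition mp_mv :: "('n::finite) mpmat \<Rightarrow> 'n mpvec \<Rightarrow> 'n mpvec" where
  "mp_mv A x = (\<lambda>i. Max (range (\<lambda>t. A i t + x t)))"

definition mp_smult :: "ereal \<Rightarrow> ('n::finite) mpvec \<Rightarrow> 'n mpvec" where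
  "mp_smult a x = (\<lambda>i. a + x i)"

definition mp_id :: "('n::finite) mpmat" where
  "mp_id = (\<lambda>i j. if i = j then 0 else -\<infinity>)"

primrec mp_pow :: "('n::finite) mpmat \<Rightarrow> nat \<Rightarrow> 'n mpmat" where
  "mp_pow M 0 = mp_id"
| "mp_pow M (Suc k) = mp_mult M (mp_pow M k)"

definition mp_Gamma :: "('n::finite) mpmat \<Rightarrow> 'n mpmat" where
  "mp_Gamma M = (\<lambda>i j. Max ((\<lambda>k. mp_pow M k i j) ` {1..card (UNIV :: 'n set)}))"

definition mp_invertible :: "('n::finite) mpmat \<Rightarrow> bool" where
  "mp_invertible P \<longleftrightarrow>
     (\<forall>i j. P i j = -\<infinity> \<or> P i j \<noteq> \<infinity> \<and> P i j \<noteq> -\<infinity>) \<and>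
     (\<forall>i. \<exists>!j. P i j \<noteq> -\<infinity>) \<and> (\<forall>j. \<exists>!i. P i j \<noteq> -\<infinity>)"

definition mp_similar :: "('n::finite) mpmat \<Rightarrow> 'n mpmat \<Rightarrow> bool" where
  "mp_similar A B \<longleftrightarrow> (\<exists>P Q. mp_invertible P \<and> mp_mult Q P = mp_id \<and> mp_mult P Q = mp_id
      \<and> B = mp_mult (mp_mult Q A) P)"

definition pseudo_diagonal :: "('n::finite) mpmat \<Rightarrow> bool" where
  "pseudo_diagonal D \<longleftrightarrow> (\<forall>i. D i i \<noteq> \<infinity> \<and> D i i \<noteq> -\<infinity>) \<and> (\<forall>i j. i \<noteq> j \<longrightarrow> D i j = 0)"

definition pseudo_diagonalizable :: "('n::finite) mpmat \<Rightarrow> bool" where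
  "pseudo_diagonalizable A \<longleftrightarrow> (\<exists>D. pseudo_diagonal D \<and> mp_similar A D)"

definition cycle_mean :: "('n \<Rightarrow> 'n \<Rightarrow> real) \<Rightarrow> 'n list \<Rightarrow> real" where
  "cycle_mean A xs =
     (\<Sum>j<length xs. A (xs ! j) (xs ! ((j + 1) mod length xs))) / real (length xs)"

definition mcm :: "('n::finite \<Rightarrow> 'n \<Rightarrow> real) \<Rightarrow> real" where
  "mcm A = Max {cycle_mean A xs | xs. xs \<noteq> [] \<and> distinct xs}"

definition A_lam :: "('n::finite \<Rightarrow> 'n \<Rightarrow> real) \<Rightarrow> 'n \<Rightarrow> 'n \<Rightarrow> real" where
  "A_lam A = (\<lambda>i j. A i j - mcm A)"

definition eigspace :: "('n::finite \<Rightarrow> 'n \<Rightarrow> real) \<Rightarrow> 'n mpvec set" where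
  "eigspace A = {x. rbar_vec x \<and> mp_mv (lift A) x = mp_smult (ereal (mcm A)) x}"

text \<open>Max-combinations of finitely many elements of S (the empty combination is
  the all-(-\<infinity>) vector).\<close>
definition mp_span :: "('n::finite) mpvec set \<Rightarrow> 'n mpvec set" where
  "mp_span S = {x. \<exists>F \<alpha>. finite F \<and> F \<subseteq> S \<and> (\<forall>v\<in>F. rbar (\<alpha> v)) \<and>
      x = (\<lambda>i. Max (insert (-\<infinity>) ((\<lambda>v. \<alpha> v + v i) ` F)))}"

definition mp_independent :: "('n::finite) mpvec set \<Rightarrow> bool" where
  "mp_independent S \<longleftrightarrow> (\<forall>v\<in>S. v \<notin> mp_span (S - {v}))"

definition mp_basis :: "('n::finite) mpvec set \<Rightarrow> 'n mpvec set \<Rightarrow> bool" where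
  "mp_basis B W \<longleftrightarrow> B \<subseteq> W \<and> mp_independent B \<and> mp_span B = W"

definition mp_d :: "('n::finite \<Rightarrow> 'n \<Rightarrow> real) \<Rightarrow> nat" where
  "mp_d A = card (SOME B. mp_basis B (eigspace A))"

end

theory Submission
  imports Defs
begin

text \<open>If \<open>P\<^sup>-\<^sup>1 \<otimes> A \<otimes> P\<close> is pseudo-diagonal then \<open>P\<close> is a monomial matrix, and comparing
  entries gives \<open>a\<^sub>i\<^sub>j = p\<^sub>i - p\<^sub>j\<close> for \<open>i \<noteq> j\<close>, where the \<open>p\<^sub>i\<close> are the finite entries of \<open>P\<close>.
  With \<open>a\<^sub>i\<^sub>i \<le> 0\<close> this means \<open>a\<^sub>i\<^sub>j \<le> p\<^sub>i - p\<^sub>j\<close> for all \<open>i, j\<close>. Telescoping, every cycle has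
  weight at most \<open>0\<close> and every path from \<open>i\<close> to \<open>j\<close> weight at most \<open>p\<^sub>i - p\<^sub>j\<close>; the bounds are
  attained by any \<open>2\<close>-cycle and by paths of length \<open>1\<close> (for \<open>i \<noteq> j\<close>) or \<open>2\<close> (for \<open>i = j\<close>),
  which gives \<open>\<lambda>(A) = 0\<close> and \<open>\<Gamma>(A) = I \<oplus> A\<close>. An eigenvector satisfies
  \<open>x\<^sub>k \<ge> p\<^sub>k - p\<^sub>t + x\<^sub>t\<close> for all \<open>t \<noteq> k\<close>, so it is \<open>x\<^sub>i\<close> times the vector \<open>(p\<^sub>k - p\<^sub>i)\<^sub>k\<close>, which
  is \<open>v\<^sup>(\<^sup>i\<^sup>)\<close>; hence \<open>V(A)\<close> is the max-plus line through \<open>v\<^sup>(\<^sup>i\<^sup>)\<close>.\<close>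

lemma Max_range_single:
  fixes g :: "'a::finite \<Rightarrow> ereal"
  assumes "\<And>k. k \<noteq> a \<Longrightarrow> g k = -\<infinity>"
  shows "Max (range g) = g a"
proof (rule Max_eqI)
  fix y assume "y \<in> range g"
  then obtain k where "y = g k" by auto
  then show "y \<le> g a" using assms by (cases "k = a") auto
qed auto

lemma mp_invertibleE:
  assumes "mp_invertible P"
  obtains f and p :: "'n::finite \<Rightarrow> real"
  where "inj f" and "\<And>t j. P t j = (if j = f t then ereal (p t) else -\<infinity>)"
proof -
  have entries: "\<And>i j. P i j = -\<infinity> \<or> P i j \<noteq> \<infinity> \<and> P i j \<noteq> -\<infinity>"
    and rows: "\<And>t. \<exists>!j. P t j \<noteq> -\<infinity>" and cols: "\<And>j. \<exists>!i. P i j \<noteq> -\<infinity>"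
    using assms unfolding mp_invertible_def by auto
  define f where "f t = (THE j. P t j \<noteq> -\<infinity>)" for t
  define p where "p t = real_of_ereal (P t (f t))" for t
  have "P t (f t) \<noteq> -\<infinity>" for t
    unfolding f_def by (rule theI'[OF rows])
  then have f: "P t j \<noteq> -\<infinity> \<longleftrightarrow> j = f t" for t j
    using rows[of t] by blast
  have "inj f"
  proof (rule injI)
    fix x y assume "f x = f y"
    then have "P x (f x) \<noteq> -\<infinity>" and "P y (f x) \<noteq> -\<infinity>" using f by auto
    then show "x = y" using cols[of "f x"] by blast
  qed
  moreover have "P t j = (if j = f t then ereal (p t) else -\<infinity>)" for t j
    using f[of t j] entries[of t j] unfolding p_def by (cases "P t j") auto
  ultimately show thesis by (rule that)
qed

text \<open>Since \<open>-\<infinity> + \<infinity> = \<infinity>\<close> in \<open>ereal\<close>, a right inverse cannot contain \<open>\<infinity>\<close>.\<close>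
lemma mp_right_inverse_finite:
  assumes "mp_mult P Q = mp_id"
  shows "Q s j \<noteq> \<infinity>"
proof
  assume "Q s j = \<infinity>"
  have "P j s + Q s j \<le> mp_mult P Q j j" unfolding mp_mult_def by (rule Max_ge) auto
  with \<open>Q s j = \<infinity>\<close> assms show False by (simp add: mp_id_def)
qed

lemma mp_right_inverse_monomial:
  assumes P: "\<And>t j. P t j = (if j = f t then ereal (p t) else -\<infinity>)"
    and PQ: "mp_mult P Q = mp_id"
  shows "Q (f t) j = (if j = t then ereal (- p t) else -\<infinity>)"
proof -
  have "mp_mult P Q t j = P t (f t) + Q (f t) j" unfolding mp_mult_def
    by (rule Max_range_single) (simp add: P mp_right_inverse_finite[OF PQ])
  then have "ereal (p t) + Q (f t) j = (if j = t then 0 else -\<infinity>)"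
    using PQ by (auto simp: P mp_id_def)
  then show ?thesis
    using mp_right_inverse_finite[OF PQ, of "f t" j] by (cases "Q (f t) j") (auto split: if_splits)
qed

lemma pseudo_diagonalizable_potentialE:
  assumes "pseudo_diagonalizable (lift A)"
  obtains p where "\<And>x y. x \<noteq> y \<Longrightarrow> A x y = p x - p y"
proof -
  obtain D P Q where D: "pseudo_diagonal D" and P_inv: "mp_invertible P"
    and PQ: "mp_mult P Q = mp_id" and D_eq: "D = mp_mult (mp_mult Q (lift A)) P"
    using assms unfolding pseudo_diagonalizable_def mp_similar_def by blast
  obtain f p where "inj f" and P: "\<And>t j. P t j = (if j = f t then ereal (p t) else -\<infinity>)"
    using mp_invertibleE[OF P_inv] by blast
  note Q = mp_right_inverse_monomial[of P f p, OF P PQ]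
  have QA: "mp_mult Q (lift A) (f x) y = ereal (A x y - p x)" for x y
  proof -
    have "mp_mult Q (lift A) (f x) y = Q (f x) x + lift A x y" unfolding mp_mult_def
      by (rule Max_range_single) (simp add: Q lift_def)
    then show ?thesis by (simp add: Q lift_def)
  qed
  have "D (f x) (f y) = mp_mult Q (lift A) (f x) y + P y (f y)" for x y
    unfolding D_eq mp_mult_def[of "mp_mult Q (lift A)" P]
    by (rule Max_range_single) (use \<open>inj f\<close> in \<open>auto simp: P QA dest: injD\<close>)
  then have "D (f x) (f y) = ereal (A x y - p x + p y)" for x y by (simp add: QA P)
  moreover have "D (f x) (f y) = 0" if "x \<noteq> y" for x y
    using D \<open>inj f\<close> that unfolding pseudo_diagonal_def by (meson injD)
  ultimately show thesis by (intro that[of p]) force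
qed

lemma sum_lessThan_rotate:
  fixes g :: "nat \<Rightarrow> 'a::comm_monoid_add"
  shows "(\<Sum>j<Suc m. g ((j + 1) mod Suc m)) = (\<Sum>j<Suc m. g j)"
proof -
  have "(\<Sum>j<Suc m. g ((j + 1) mod Suc m)) = (\<Sum>j<m. g ((j + 1) mod Suc m)) + g 0"
    by (simp add: sum.lessThan_Suc)
  also have "(\<Sum>j<m. g ((j + 1) mod Suc m)) = (\<Sum>j<m. g (Suc j))"
    by (rule sum.cong) auto
  also have "(\<Sum>j<m. g (Suc j)) + g 0 = (\<Sum>j<Suc m. g j)"
    by (subst sum.lessThan_Suc_shift) (simp add: add.commute)
  finally show ?thesis .
qed

lemma finite_cycle_means:
  fixes A :: "'n::finite \<Rightarrow> 'n \<Rightarrow> real"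
  shows "finite {cycle_mean A xs | xs. xs \<noteq> [] \<and> distinct xs}"
proof (rule finite_subset)
  show "finite (cycle_mean A ` {xs. set xs \<subseteq> UNIV \<and> distinct xs})"
    by (rule finite_imageI, rule finite_subset_distinct) simp
qed auto

lemma cycle_mean_two: "cycle_mean A [a, b] = (A a b + A b a) / 2"
  unfolding cycle_mean_def by (simp add: numeral_2_eq_2)

lemma ex_other_index:
  fixes k :: "'n::finite"
  assumes "card (UNIV :: 'n set) \<ge> 2"
  obtains t where "t \<noteq> k"
proof -
  have "UNIV \<noteq> {k}"
  proof
    assume "UNIV = {k}"
    then have "card (UNIV :: 'n set) = card {k}" by (rule arg_cong)
    with assms show False by simp
  qed
  then show thesis using that by blast
qed

lemma mp_pow_lift_1: "mp_pow (lift A) 1 = lift A"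
  unfolding mp_pow.simps One_nat_def mp_mult_def
  by (intro ext, subst Max_range_single[of _ j for j]) (auto simp: lift_def mp_id_def)

lemma mp_pow_Suc_ge: "M i t + mp_pow M k t j \<le> mp_pow M (Suc k) i j"
  unfolding mp_pow.simps mp_mult_def by (rule Max_ge) auto

lemma mp_smult_smult: "mp_smult \<alpha> (mp_smult \<beta> x) = mp_smult (\<alpha> + \<beta>) x"
  unfolding mp_smult_def by (simp add: add.assoc)

lemma mp_mv_smult: "mp_mv M (mp_smult \<alpha> x) = mp_smult \<alpha> (mp_mv M x)"
proof
  fix i
  have "mp_mv M (mp_smult \<alpha> x) i = Max ((+) \<alpha> ` range (\<lambda>t. M i t + x t))"
    unfolding mp_mv_def mp_smult_def image_image by (simp add: add.left_commute)
  also have "\<dots> = \<alpha> + Max (range (\<lambda>t. M i t + x t))"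
    by (rule mono_Max_commute[symmetric]) (auto intro: monoI add_left_mono)
  finally show "mp_mv M (mp_smult \<alpha> x) i = mp_smult \<alpha> (mp_mv M x) i"
    unfolding mp_mv_def mp_smult_def .
qed

locale off_diagonal_potential =
  fixes A :: "'n::finite \<Rightarrow> 'n \<Rightarrow> real" and p :: "'n \<Rightarrow> real"
  assumes off_diagonal: "\<And>x y. x \<noteq> y \<Longrightarrow> A x y = p x - p y"
    and diagonal_nonpos: "\<And>i. A i i \<le> 0"
begin

lemma le_potential: "A x y \<le> p x - p y"
  using off_diagonal diagonal_nonpos by (cases "x = y") auto

lemma cycle_mean_nonpos:
  assumes "xs \<noteq> []"
  shows "cycle_mean A xs \<le> 0"
proof -
  obtain m where m: "length xs = Suc m" using assms by (cases xs) auto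
  have "(\<Sum>j<length xs. A (xs ! j) (xs ! ((j + 1) mod length xs)))
      \<le> (\<Sum>j<length xs. p (xs ! j) - p (xs ! ((j + 1) mod length xs)))"
    by (rule sum_mono) (rule le_potential)
  also have "\<dots> = 0"
    unfolding sum_subtractf m using sum_lessThan_rotate[of "\<lambda>j. p (xs ! j)" m] by simp
  finally show ?thesis unfolding cycle_mean_def by (intro divide_nonpos_nonneg) auto
qed

lemma mcm_eq_0:
  assumes "card (UNIV :: 'n set) \<ge> 2"
  shows "mcm A = 0"
proof -
  obtain a b :: 'n where "b \<noteq> a" using ex_other_index[OF assms] by metis
  then have "cycle_mean A [a, b] = 0" by (simp add: cycle_mean_two off_diagonal)
  with \<open>b \<noteq> a\<close> have "0 \<in> {cycle_mean A xs | xs. xs \<noteq> [] \<and> distinct xs}"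
    by (intro CollectI exI[of _ "[a, b]"]) auto
  then show ?thesis
    unfolding mcm_def using cycle_mean_nonpos by (intro Max_eqI[OF finite_cycle_means]) auto
qed

lemma mp_pow_le_potential: "mp_pow (lift A) k i j \<le> ereal (p i - p j)"
proof (induction k arbitrary: i)
  case 0
  show ?case by (auto simp: mp_id_def)
next
  case (Suc k)
  have "ereal (A i t) + mp_pow (lift A) k t j \<le> ereal (p i - p t) + ereal (p t - p j)" for t
    using le_potential Suc by (intro add_mono) auto
  then show ?case by (auto simp: mp_mult_def lift_def)
qed

lemma mp_pow_attains_potential:
  assumes "card (UNIV :: 'n set) \<ge> 2"
  obtains k where "k \<in> {1..card (UNIV :: 'n set)}" and "mp_pow (lift A) k i j = ereal (p i - p j)"
proof (cases "i = j")
  case True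
  obtain t where "t \<noteq> i" using ex_other_index[OF assms] .
  have "lift A i t + lift A t j \<le> mp_pow (lift A) 2 i j"
    using mp_pow_Suc_ge[of "lift A" i t 1 j] by (simp only: mp_pow_lift_1 Suc_1)
  then have "ereal (p i - p j) \<le> mp_pow (lift A) 2 i j"
    using True \<open>t \<noteq> i\<close> by (simp add: lift_def off_diagonal)
  then show thesis
    using assms by (intro that[of 2] order.antisym mp_pow_le_potential) auto
next
  case False
  show thesis
  proof (rule that[of 1])
    show "mp_pow (lift A) 1 i j = ereal (p i - p j)"
      unfolding mp_pow_lift_1 using False by (simp add: lift_def off_diagonal)
  qed (use assms in auto)
qed

lemma mp_Gamma_eq:
  assumes "card (UNIV :: 'n set) \<ge> 2"
  shows "mp_Gamma (lift A) = mp_add mp_id (lift A)"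
proof (intro ext)
  fix i j
  obtain k where k: "k \<in> {1..card (UNIV :: 'n set)}" "mp_pow (lift A) k i j = ereal (p i - p j)"
    using mp_pow_attains_potential[OF assms] .
  have "mp_Gamma (lift A) i j = ereal (p i - p j)"
    unfolding mp_Gamma_def
    by (rule Max_eqI) (use k mp_pow_le_potential in \<open>auto intro: rev_image_eqI\<close>)
  also have "\<dots> = mp_add mp_id (lift A) i j"
    using diagonal_nonpos[of i]
    by (cases "i = j") (auto simp: mp_add_def mp_id_def lift_def off_diagonal max_def)
  finally show "mp_Gamma (lift A) i j = mp_add mp_id (lift A) i j" .
qed

lemma potential_column: "(\<lambda>k. if k = i then 0 else ereal (A k i)) = (\<lambda>k. ereal (p k - p i))"
  by (auto simp: off_diagonal)

lemma mp_mv_potential: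
  assumes "card (UNIV :: 'n set) \<ge> 2"
  shows "mp_mv (lift A) (\<lambda>k. ereal (p k - p i)) = (\<lambda>k. ereal (p k - p i))"
proof
  fix k :: 'n
  obtain t where "t \<noteq> k" using ex_other_index[OF assms] by blast
  show "mp_mv (lift A) (\<lambda>k. ereal (p k - p i)) k = ereal (p k - p i)"
    unfolding mp_mv_def lift_def
  proof (rule Max_eqI)
    fix y assume "y \<in> range (\<lambda>s. ereal (A k s) + ereal (p s - p i))"
    then obtain s where y: "y = ereal (A k s) + ereal (p s - p i)" by blast
    have "A k s + (p s - p i) \<le> p k - p i" using le_potential[of k s] by linarith
    then show "y \<le> ereal (p k - p i)" by (simp add: y)
  next
    have "A k t = p k - p t" using \<open>t \<noteq> k\<close> off_diagonal by simp
    then show "ereal (p k - p i) \<in> range (\<lambda>s. ereal (A k s) + ereal (p s - p i))"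
      by (intro range_eqI[where x = t]) simp
  qed simp
qed

lemma mp_mv_fixed_point_eq_smult:
  assumes "rbar_vec x" and "mp_mv (lift A) x = x"
  shows "x = mp_smult (x i) (\<lambda>k. ereal (p k - p i))"
proof
  fix k :: 'n
  have finite: "x k \<noteq> \<infinity>" for k
    using assms(1) unfolding rbar_vec_def rbar_def by blast
  have ge: "ereal (p k - p t) + x t \<le> x k" if "t \<noteq> k" for k t
  proof -
    have "ereal (A k t) + x t \<le> mp_mv (lift A) x k"
      unfolding mp_mv_def lift_def by (rule Max_ge) auto
    then show ?thesis using assms(2) that by (simp add: off_diagonal)
  qed
  show "x k = mp_smult (x i) (\<lambda>k. ereal (p k - p i)) k"
  proof (cases "k = i")
    case False
    then have "ereal (p k - p i) + x i \<le> x k" and "ereal (p i - p k) + x k \<le> x i"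
      using ge by auto
    then show ?thesis
      using finite[of k] finite[of i] unfolding mp_smult_def
      by (cases "x k"; cases "x i") (auto simp: add.commute)
  qed (simp add: mp_smult_def)
qed

lemma eigspace_eq:
  assumes "card (UNIV :: 'n set) \<ge> 2"
  shows "eigspace A = {mp_smult \<alpha> (\<lambda>k. ereal (p k - p i)) | \<alpha>. rbar \<alpha>}"
proof -
  have eigspace_iff: "x \<in> eigspace A \<longleftrightarrow> rbar_vec x \<and> mp_mv (lift A) x = x" for x
    unfolding eigspace_def mcm_eq_0[OF assms] mp_smult_def by simp
  show ?thesis
  proof (intro set_eqI iffI)
    fix x assume "x \<in> eigspace A"
    then have "rbar_vec x" and "mp_mv (lift A) x = x" by (auto simp: eigspace_iff)
    then show "x \<in> {mp_smult \<alpha> (\<lambda>k. ereal (p k - p i)) | \<alpha>. rbar \<alpha>}"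
      using mp_mv_fixed_point_eq_smult[of x i] unfolding rbar_vec_def by blast
  next
    fix x assume "x \<in> {mp_smult \<alpha> (\<lambda>k. ereal (p k - p i)) | \<alpha>. rbar \<alpha>}"
    then obtain \<alpha> where x: "x = mp_smult \<alpha> (\<lambda>k. ereal (p k - p i))" and "rbar \<alpha>" by blast
    then have "rbar_vec x" unfolding rbar_vec_def rbar_def mp_smult_def by auto
    then show "x \<in> eigspace A"
      by (simp add: eigspace_iff x mp_mv_smult mp_mv_potential[OF assms])
  qed
qed

end

lemma mp_span_mono: "S \<subseteq> T \<Longrightarrow> mp_span S \<subseteq> mp_span T"
  unfolding mp_span_def by blast

lemma mp_span_empty: "mp_span {} = {(\<lambda>k. -\<infinity>)}"
  unfolding mp_span_def by auto

lemma bot_vec_in_mp_span: "(\<lambda>k. -\<infinity>) \<in> mp_span S"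
  using mp_span_mono[of "{}" S] by (auto simp: mp_span_empty)

lemma mp_span_singleton:
  assumes "\<And>k. u k \<noteq> \<infinity>"
  shows "mp_span {u} = {mp_smult \<alpha> u | \<alpha>. rbar \<alpha>}"
proof (intro set_eqI iffI)
  fix x assume "x \<in> mp_span {u}"
  then obtain F \<alpha> where F: "F \<subseteq> {u}" and rbar_\<alpha>: "\<forall>v\<in>F. rbar (\<alpha> v)"
    and x: "x = (\<lambda>i. Max (insert (-\<infinity>) ((\<lambda>v. \<alpha> v + v i) ` F)))"
    unfolding mp_span_def by blast
  show "x \<in> {mp_smult \<alpha> u | \<alpha>. rbar \<alpha>}"
  proof (cases "F = {}")
    case True
    have "x = mp_smult (-\<infinity>) u"
      using assms True unfolding x mp_smult_def by auto
    then show ?thesis by (auto simp: rbar_def)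
  next
    case False
    with F have "F = {u}" by auto
    then have "x = mp_smult (\<alpha> u) u" unfolding x mp_smult_def by simp
    then show ?thesis using rbar_\<alpha> \<open>F = {u}\<close> by blast
  qed
next
  fix x assume "x \<in> {mp_smult \<alpha> u | \<alpha>. rbar \<alpha>}"
  then obtain a where "x = mp_smult a u" and "rbar a" by blast
  then show "x \<in> mp_span {u}" unfolding mp_span_def
    by (intro CollectI exI[of _ "{u}"] exI[of _ "\<lambda>_. a"]) (auto simp: mp_smult_def)
qed

lemma mp_basis_singleton:
  assumes "\<And>k. u k \<noteq> \<infinity>" and "u \<noteq> (\<lambda>k. -\<infinity>)"
  shows "mp_basis {u} (mp_span {u})"
proof -
  have "u = mp_smult 0 u" by (simp add: mp_smult_def)
  then have "u \<in> mp_span {u}" unfolding mp_span_singleton[OF assms(1)] by (force simp: rbar_def)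
  then show ?thesis
    using assms(2) unfolding mp_basis_def mp_independent_def by (simp add: mp_span_empty)
qed

lemma card_mp_basis_span_singleton:
  assumes w: "\<And>k. w k \<noteq> \<infinity>" "\<And>k. w k \<noteq> -\<infinity>"
    and B: "mp_basis B (mp_span {w})"
  shows "card B = 1"
proof -
  have indep: "mp_independent B" and span_B: "mp_span B = mp_span {w}"
    using B unfolding mp_basis_def by auto
  have real_multiple: "\<exists>a. b = mp_smult (ereal a) w" if "b \<in> B" for b
  proof -
    obtain \<alpha> where b: "b = mp_smult \<alpha> w" and "rbar \<alpha>"
      using B \<open>b \<in> B\<close> unfolding mp_basis_def mp_span_singleton[OF w(1)] by blast
    have "b \<noteq> (\<lambda>k. -\<infinity>)"
      using indep \<open>b \<in> B\<close> bot_vec_in_mp_span unfolding mp_independent_def by blast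
    then have "\<alpha> \<noteq> -\<infinity>" using w(1) unfolding b mp_smult_def by auto
    with \<open>rbar \<alpha>\<close> show ?thesis unfolding b rbar_def by (cases \<alpha>) auto
  qed
  have "B \<noteq> {}"
  proof
    assume "B = {}"
    then have "w \<in> {(\<lambda>k. -\<infinity>)}"
      using mp_basis_singleton[of w] w span_B by (auto simp: mp_basis_def mp_span_empty)
    with w(2) show False by auto
  qed
  then obtain b where "b \<in> B" by blast
  moreover have "b1 = b2" if "b1 \<in> B" and "b2 \<in> B" for b1 b2
  proof (rule ccontr)
    assume "b1 \<noteq> b2"
    obtain a1 a2 where b1: "b1 = mp_smult (ereal a1) w" and b2: "b2 = mp_smult (ereal a2) w"
      using real_multiple \<open>b1 \<in> B\<close> \<open>b2 \<in> B\<close> by blast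
    have "b1 = mp_smult (ereal (a1 - a2)) b2"
      unfolding b1 b2 mp_smult_smult by simp
    moreover have "\<And>k. b2 k \<noteq> \<infinity>" using w(1) unfolding b2 mp_smult_def by simp
    ultimately have "b1 \<in> mp_span {b2}" by (auto simp: mp_span_singleton rbar_def)
    also have "\<dots> \<subseteq> mp_span (B - {b1})"
      using \<open>b2 \<in> B\<close> \<open>b1 \<noteq> b2\<close> by (intro mp_span_mono) auto
    finally show False using indep \<open>b1 \<in> B\<close> unfolding mp_independent_def by blast
  qed
  ultimately have "B = {b}" by blast
  then show ?thesis by simp
qed

theorem theorem5p8:
  fixes A :: "'n::finite \<Rightarrow> 'n \<Rightarrow> real"
  assumes "card (UNIV :: 'n set) \<ge> 2"
    and "pseudo_diagonalizable (lift A)"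
    and "\<forall>i. A i i \<le> 0"
  shows "mcm A = 0
    \<and> mp_Gamma (lift (A_lam A)) = mp_add mp_id (lift A)
    \<and> mp_d A = 1
    \<and> (\<forall>i. let v = (\<lambda>k. if k = i then 0 else ereal (A k i)) in
          mp_basis {v} (eigspace A)
          \<and> eigspace A = {mp_smult \<alpha> v | \<alpha>. rbar \<alpha>})"
proof -
  obtain p where "\<And>x y. x \<noteq> y \<Longrightarrow> A x y = p x - p y"
    using pseudo_diagonalizable_potentialE[OF assms(2)] by blast
  then interpret off_diagonal_potential A p
    using assms(3) by unfold_locales auto
  have mcm: "mcm A = 0" using mcm_eq_0[OF assms(1)] .
  have Gamma: "mp_Gamma (lift (A_lam A)) = mp_add mp_id (lift A)"
    using mp_Gamma_eq[OF assms(1)] by (simp add: A_lam_def mcm)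
  define w where "w i = (\<lambda>k. ereal (p k - p i))" for i
  have w_real: "w i k \<noteq> \<infinity>" "w i k \<noteq> -\<infinity>" for i k
    by (simp_all add: w_def)
  have w_nonzero: "w i \<noteq> (\<lambda>k. -\<infinity>)" for i
    using w_real(2) by metis
  have eigspace_smult: "eigspace A = {mp_smult \<alpha> (w i) | \<alpha>. rbar \<alpha>}" for i
    unfolding w_def by (rule eigspace_eq[OF assms(1)])
  then have eigspace: "eigspace A = mp_span {w i}" for i
    by (simp add: mp_span_singleton[of "w i", OF w_real(1)])
  have basis: "mp_basis {w i} (eigspace A)" for i
    unfolding eigspace[of i] by (rule mp_basis_singleton[OF w_real(1) w_nonzero])
  have d: "mp_d A = 1"
    unfolding mp_d_def using basis[of undefined] unfolding eigspace[of undefined]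
    by (rule someI2) (rule card_mp_basis_span_singleton[OF w_real])
  show ?thesis
    unfolding Let_def potential_column
    using mcm Gamma d basis[unfolded w_def] eigspace_smult[unfolded w_def] by blast
qed

end
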